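(* Let $\Omega\subset\mathbb{R}^N$ be a bounded smooth domain and $f$ a Carath\'eodory function satisfying $(f_1)$: for a.e. $x$, $t\mapsto f(x,t)/t$ is increasing on $(0,\infty)$ and decreasing on $(-\infty,0)$, $\alpha(x):=\lim_{t\to0}f(x,t)/t\ge0$ and $\eta(x):=\lim_{|t|\to\infty}f(x,t)/t$ exist a.e. and lie in $L^\infty(\Omega)$; and $(f_2)$: $\lambda_m(\eta)<1<\lambda_1(\alpha)$ for some $m\ge1$. Then $I$ is bounded from below on $\mathcal N$; more precisely $I(u)>0$ for all $u\in\mathcal N$.
   Context: $\|u\|^2=\int_\Omega|\nabla u|^2dx$ on $H_0^1(\Omega)$. For $\theta\in L^\infty(\Omega)$, $\lambda_1(\theta)<\lambda_2(\theta)<\cdots$ are the distinct positive eigenvalues of $-\Delta u=\lambda\theta u$ in $\Omega$, $u=0$ on $\partial\Omega$, with $\lambda_1(0)=\infty$. $F(x,t)=\int_0^tf(x,s)ds$, $I(u)=\frac12\|u\|^2-\int_\Omega F(x,u)dx$, $\mathcal N=\{u\in H_0^1(\Omega)\setminus\{0\}:\|u\|^2=\int_\Omega f(x,u)u\,dx\}$. *)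

theory Defs
  imports "HOL-Analysis.Analysis"
begin

coinductive C_inf_on :: "'a::euclidean_space set \<Rightarrow> ('a \<Rightarrow> real) \<Rightarrow> bool" where
  "(\<And>x. x \<in> U \<Longrightarrow> GDERIV f x :> g x) \<Longrightarrow> (\<And>b. b \<in> Basis \<Longrightarrow> C_inf_on U (\<lambda>x. g x \<bullet> b))
   \<Longrightarrow> C_inf_on U f"

definition Cc_inf :: "'a::euclidean_space set \<Rightarrow> ('a \<Rightarrow> real) set" where
  "Cc_inf \<Omega> = {\<phi>. C_inf_on UNIV \<phi> \<and> compact (closure {x. \<phi> x \<noteq> 0})
                  \<and> closure {x. \<phi> x \<noteq> 0} \<subseteq> \<Omega>}"

definition smooth_bounded_domain :: "'a::euclidean_space set \<Rightarrow> bool" where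
  "smooth_bounded_domain \<Omega> \<longleftrightarrow> open \<Omega> \<and> connected \<Omega> \<and> bounded \<Omega> \<and> \<Omega> \<noteq> {} \<and>
     (\<forall>p\<in>frontier \<Omega>. \<exists>r>0. \<exists>\<psi>. C_inf_on (ball p r) \<psi> \<and>
        (\<forall>x\<in>ball p r. \<exists>D. GDERIV \<psi> x :> D \<and> D \<noteq> 0) \<and>
        \<Omega> \<inter> ball p r = {x\<in>ball p r. \<psi> x < 0})"

(* H01 \<Omega> u G: u belongs to H_0^1(\<Omega>) (closure of C_c^\<infinity>(\<Omega>) in the H^1 norm)
   and G is its (weak) gradient. *)
definition H01 :: "'a::euclidean_space set \<Rightarrow> ('a \<Rightarrow> real) \<Rightarrow> ('a \<Rightarrow> 'a) \<Rightarrow> bool" where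
  "H01 \<Omega> u G \<longleftrightarrow>
     set_borel_measurable lebesgue \<Omega> u \<and> set_integrable lebesgue \<Omega> (\<lambda>x. (u x)\<^sup>2) \<and>
     set_borel_measurable lebesgue \<Omega> G \<and> set_integrable lebesgue \<Omega> (\<lambda>x. (norm (G x))\<^sup>2) \<and>
     (\<exists>\<phi> d\<phi>. (\<forall>k. \<phi> k \<in> Cc_inf \<Omega>) \<and> (\<forall>k x. GDERIV (\<phi> k) x :> d\<phi> k x) \<and>
        (\<lambda>k. \<integral>x\<in>\<Omega>. (\<phi> k x - u x)\<^sup>2 \<partial>lebesgue) \<longlonglongrightarrow> 0 \<and>
        (\<lambda>k. \<integral>x\<in>\<Omega>. (norm (d\<phi> k x - G x))\<^sup>2 \<partial>lebesgue) \<longlonglongrightarrow> 0)"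

definition nonzero_on :: "'a::euclidean_space set \<Rightarrow> ('a \<Rightarrow> real) \<Rightarrow> bool" where
  "nonzero_on \<Omega> u \<longleftrightarrow> \<not> (AE x\<in>\<Omega> in lebesgue. u x = 0)"

definition pos_eigenvalues :: "'a::euclidean_space set \<Rightarrow> ('a \<Rightarrow> real) \<Rightarrow> real set" where
  "pos_eigenvalues \<Omega> \<theta> = {l. l > 0 \<and> (\<exists>u G. H01 \<Omega> u G \<and> nonzero_on \<Omega> u \<and>
      (\<forall>v H. H01 \<Omega> v H \<longrightarrow>
         (\<integral>x\<in>\<Omega>. G x \<bullet> H x \<partial>lebesgue) = l * (\<integral>x\<in>\<Omega>. \<theta> x * u x * v x \<partial>lebesgue)))}"

(* lambda_k(\<theta>), k \<ge> 1: the k-th smallest distinct positive eigenvalue; \<infinity> if there is none *)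
definition eig :: "'a::euclidean_space set \<Rightarrow> ('a \<Rightarrow> real) \<Rightarrow> nat \<Rightarrow> ereal" where
  "eig \<Omega> \<theta> k =
     (if \<exists>l\<in>pos_eigenvalues \<Omega> \<theta>. finite {\<mu>\<in>pos_eigenvalues \<Omega> \<theta>. \<mu> < l}
                 \<and> card {\<mu>\<in>pos_eigenvalues \<Omega> \<theta>. \<mu> < l} = k - 1
      then ereal (THE l. l \<in> pos_eigenvalues \<Omega> \<theta> \<and> finite {\<mu>\<in>pos_eigenvalues \<Omega> \<theta>. \<mu> < l}
                 \<and> card {\<mu>\<in>pos_eigenvalues \<Omega> \<theta>. \<mu> < l} = k - 1)
      else \<infinity>)"

definition Fprim :: "('a \<Rightarrow> real \<Rightarrow> real) \<Rightarrow> 'a \<Rightarrow> real \<Rightarrow> real" where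
  "Fprim f x t = (LBINT s=0..t. f x s)"

definition Ifun :: "'a::euclidean_space set \<Rightarrow> ('a \<Rightarrow> real \<Rightarrow> real) \<Rightarrow> ('a \<Rightarrow> real) \<Rightarrow> ('a \<Rightarrow> 'a) \<Rightarrow> real" where
  "Ifun \<Omega> f u G = (1/2) * (\<integral>x\<in>\<Omega>. (norm (G x))\<^sup>2 \<partial>lebesgue) - (\<integral>x\<in>\<Omega>. Fprim f x (u x) \<partial>lebesgue)"

definition Nehari :: "'a::euclidean_space set \<Rightarrow> ('a \<Rightarrow> real \<Rightarrow> real) \<Rightarrow> ('a \<Rightarrow> real) \<Rightarrow> ('a \<Rightarrow> 'a) \<Rightarrow> bool" where
  "Nehari \<Omega> f u G \<longleftrightarrow> H01 \<Omega> u G \<and> nonzero_on \<Omega> u \<and>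
     (\<integral>x\<in>\<Omega>. (norm (G x))\<^sup>2 \<partial>lebesgue) = (\<integral>x\<in>\<Omega>. f x (u x) * u x \<partial>lebesgue)"

definition caratheodory :: "'a::euclidean_space set \<Rightarrow> ('a \<Rightarrow> real \<Rightarrow> real) \<Rightarrow> bool" where
  "caratheodory \<Omega> f \<longleftrightarrow> (\<forall>t. set_borel_measurable lebesgue \<Omega> (\<lambda>x. f x t)) \<and>
     (AE x\<in>\<Omega> in lebesgue. continuous_on UNIV (f x))"

definition Linfty :: "'a::euclidean_space set \<Rightarrow> ('a \<Rightarrow> real) \<Rightarrow> bool" where
  "Linfty \<Omega> \<theta> \<longleftrightarrow> set_borel_measurable lebesgue \<Omega> \<theta> \<and> (\<exists>C. AE x\<in>\<Omega> in lebesgue. \<bar>\<theta> x\<bar> \<le> C)"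

end

(*
  On the Nehari manifold \<parallel>u\<parallel>^2 = \<integral> f(x,u) u, so I(u) = \<integral> (f(x,u) u / 2 - F(x,u)).
  Because f(x,s)/s increases with |s|, F(x,t) = \<integral>_0^t f(x,s) ds < f(x,t) t / 2 for t \<noteq> 0,
  and because \<alpha> \<ge> 0 also f(x,t) t > 0. The integrand is therefore nonnegative and positive
  wherever u \<noteq> 0, which happens on a set of positive measure. The bound on \<eta> gives
  f(x,t) t \<le> C t^2, so f(x,u) u is integrable.
*)
theory Submission
  imports Defs
begin

section \<open>Real functions whose difference quotient increases\<close>

lemma integral_cmult_ident_atLeastAtMost:
  fixes a b c :: real assumes "a \<le> b"
  shows "integral {a..b} (\<lambda>s. c * s) = c * (b^2 - a^2) / 2"
proof -
  have "((\<lambda>s. c * s) has_integral ((\<lambda>s. c * s^2/2) b - (\<lambda>s. c * s^2/2) a)) {a..b}"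
  proof (rule fundamental_theorem_of_calculus[OF assms])
    fix x assume "x \<in> {a..b}"
    show "((\<lambda>s. c * s^2/2) has_vector_derivative c * x) (at x within {a..b})"
      unfolding has_real_derivative_iff_has_vector_derivative[symmetric]
      by (auto intro!: derivative_eq_intros)
  qed
  then have "integral {a..b} (\<lambda>s. c * s) = c * b^2/2 - c * a^2/2" by (rule integral_unique)
  then show ?thesis by (simp add: right_diff_distrib diff_divide_distrib)
qed

lemma le_quotient_mult_if_strict_mono_on:
  fixes \<phi> :: "real \<Rightarrow> real"
  assumes mono: "strict_mono_on {0<..} (\<lambda>s. \<phi> s / s)" and "0 < s" "s \<le> c"
  shows "\<phi> s \<le> \<phi> c / c * s"
proof -
  have "\<phi> s / s \<le> \<phi> c / c"
  proof (cases "s = c")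
    case False
    then show ?thesis using assms by (intro less_imp_le strict_mono_onD[OF mono]) auto
  qed simp
  then show ?thesis using \<open>0 < s\<close> by (simp add: field_simps)
qed

lemma LBINT_less_half_if_strict_mono_quotient:
  fixes \<phi> :: "real \<Rightarrow> real"
  assumes cont: "continuous_on UNIV \<phi>" and zero: "\<phi> 0 = 0"
    and mono: "strict_mono_on {0<..} (\<lambda>s. \<phi> s / s)" and t: "t > 0"
  shows "(LBINT s=0..t. \<phi> s) < \<phi> t * t / 2"
proof -
  define k where "k = \<phi> t / t"
  define k' where "k' = \<phi> (t/2) / (t/2)"
  have "k' < k" unfolding k_def k'_def using t by (intro strict_mono_onD[OF mono]) auto
  have cont_Icc: "continuous_on {a..b} \<phi>" for a b using cont continuous_on_subset by blast
  \<comment> \<open>Bounding \<open>\<phi>\<close> by a line on each half of \<open>[0,t]\<close> makes the inequality strict.\<close>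
  have "(LBINT s=0..t. \<phi> s) = integral {0..t} \<phi>"
    using t interval_integral_eq_integral[OF _ borel_integrable_atLeastAtMost'[OF cont_Icc]]
    by (simp add: zero_ereal_def)
  also have "\<dots> = integral {0..t/2} \<phi> + integral {t/2..t} \<phi>"
    using t Henstock_Kurzweil_Integration.integral_combine[OF _ _ integrable_continuous_interval[OF cont_Icc]] by simp
  also have "\<dots> \<le> integral {0..t/2} (\<lambda>s. k' * s) + integral {t/2..t} (\<lambda>s. k * s)"
  proof (intro add_mono integral_le integrable_continuous_interval cont_Icc)
    fix s assume "s \<in> {0..t/2}"
    then show "\<phi> s \<le> k' * s"
      using le_quotient_mult_if_strict_mono_on[OF mono, of s "t/2"] zero
      by (cases "s = 0") (auto simp: k'_def)
  next
    fix s assume "s \<in> {t/2..t}"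
    then show "\<phi> s \<le> k * s"
      using le_quotient_mult_if_strict_mono_on[OF mono, of s t] t by (auto simp: k_def)
  qed (auto intro!: continuous_intros)
  also have "\<dots> = k' * (t/2)^2 / 2 + k * (t^2 - (t/2)^2) / 2"
    using t by (simp add: integral_cmult_ident_atLeastAtMost)
  also have "\<dots> < k * t^2 / 2"
    using \<open>k' < k\<close> t by (simp add: field_simps power2_eq_square)
  also have "\<dots> = \<phi> t * t / 2" unfolding k_def using t by (simp add: power2_eq_square)
  finally show ?thesis .
qed

lemma zero_if_quotient_tendsto_at_0:
  fixes \<phi> :: "real \<Rightarrow> real"
  assumes "isCont \<phi> 0" and "((\<lambda>t. \<phi> t / t) \<longlongrightarrow> a) (at 0)"
  shows "\<phi> 0 = 0"
proof -
  have "((\<lambda>t. \<phi> t / t * t) \<longlongrightarrow> a * 0) (at 0)"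
    by (intro tendsto_mult assms(2) tendsto_ident_at)
  moreover have "eventually (\<lambda>t. \<phi> t / t * t = \<phi> t) (at (0::real))"
    by (auto simp: eventually_at_filter)
  ultimately have "(\<phi> \<longlongrightarrow> 0) (at 0)" using tendsto_cong by force
  then show ?thesis using assms(1) by (simp add: isCont_def LIM_unique)
qed

lemma quotient_ge_tendsto_at_0:
  fixes \<phi> :: "real \<Rightarrow> real"
  assumes mono: "strict_mono_on {0<..} (\<lambda>t. \<phi> t / t)"
    and anti: "strict_antimono_on {..<0} (\<lambda>t. \<phi> t / t)"
    and lim: "((\<lambda>t. \<phi> t / t) \<longlongrightarrow> a) (at 0)" and "t \<noteq> 0"
  shows "a \<le> \<phi> t / t"
proof (cases "t > 0")
  case True
  show ?thesis
  proof (rule tendsto_upperbound)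
    show "((\<lambda>t. \<phi> t / t) \<longlongrightarrow> a) (at_right 0)"
      using lim by (rule tendsto_within_subset) simp
    show "\<forall>\<^sub>F s in at_right 0. \<phi> s / s \<le> \<phi> t / t"
      using eventually_at_right_real[OF True]
      by eventually_elim (auto intro!: less_imp_le monotone_onD[OF mono])
  qed simp
next
  case False
  then have "t < 0" using \<open>t \<noteq> 0\<close> by simp
  show ?thesis
  proof (rule tendsto_upperbound)
    show "((\<lambda>t. \<phi> t / t) \<longlongrightarrow> a) (at_left 0)"
      using lim by (rule tendsto_within_subset) simp
    show "\<forall>\<^sub>F s in at_left 0. \<phi> s / s \<le> \<phi> t / t"
      using eventually_at_left_real[OF \<open>t < 0\<close>]
      by eventually_elim (auto intro!: less_imp_le monotone_onD[OF anti])
  qed simp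
qed

lemma quotient_le_tendsto_at_infinity:
  fixes \<phi> :: "real \<Rightarrow> real"
  assumes mono: "strict_mono_on {0<..} (\<lambda>t. \<phi> t / t)"
    and anti: "strict_antimono_on {..<0} (\<lambda>t. \<phi> t / t)"
    and lim: "((\<lambda>t. \<phi> t / t) \<longlongrightarrow> e) at_infinity" and "t \<noteq> 0"
  shows "\<phi> t / t \<le> e"
proof (cases "t > 0")
  case True
  show ?thesis
  proof (rule tendsto_lowerbound)
    show "((\<lambda>t. \<phi> t / t) \<longlongrightarrow> e) at_top"
      using lim by (rule tendsto_mono[OF at_top_le_at_infinity])
    show "\<forall>\<^sub>F s in at_top. \<phi> t / t \<le> \<phi> s / s"
      using eventually_ge_at_top[of t]
      by eventually_elim (use True in \<open>auto intro!: strict_mono_on_leD[OF mono]\<close>)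
  qed simp
next
  case False
  then have "t < 0" using \<open>t \<noteq> 0\<close> by simp
  show ?thesis
  proof (rule tendsto_lowerbound)
    show "((\<lambda>t. \<phi> t / t) \<longlongrightarrow> e) at_bot"
      using lim by (rule tendsto_mono[OF at_bot_le_at_infinity])
    show "\<forall>\<^sub>F s in at_bot. \<phi> t / t \<le> \<phi> s / s"
      using eventually_le_at_bot[of t]
      by eventually_elim
        (use \<open>t < 0\<close> in \<open>auto intro: less_imp_le monotone_onD[OF anti] simp: le_less\<close>)
  qed simp
qed

lemma mult_self_pos_if_quotient_tendsto_nonneg:
  fixes \<phi> :: "real \<Rightarrow> real"
  assumes mono: "strict_mono_on {0<..} (\<lambda>t. \<phi> t / t)"
    and anti: "strict_antimono_on {..<0} (\<lambda>t. \<phi> t / t)"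
    and lim: "((\<lambda>t. \<phi> t / t) \<longlongrightarrow> a) (at 0)" and "a \<ge> 0" and t: "t \<noteq> 0"
  shows "0 < \<phi> t * t"
proof -
  have "\<phi> (t/2) / (t/2) < \<phi> t / t"
  proof (cases "t > 0")
    case True then show ?thesis by (intro monotone_onD[OF mono]) auto
  next
    case False then show ?thesis using t by (intro monotone_onD[OF anti]) auto
  qed
  moreover have "a \<le> \<phi> (t/2) / (t/2)"
    using t by (intro quotient_ge_tendsto_at_0[OF mono anti lim]) simp
  ultimately have "0 < \<phi> t / t" using \<open>a \<ge> 0\<close> by linarith
  moreover have "0 < t * t" using t by (simp add: zero_less_mult_iff) linarith
  ultimately have "0 < \<phi> t / t * (t * t)" by (rule mult_pos_pos)
  then show ?thesis using t by (simp add: divide_simps)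
qed

lemma LBINT_less_half_if_strict_mono_antimono_quotient:
  fixes \<phi> :: "real \<Rightarrow> real"
  assumes cont: "continuous_on UNIV \<phi>" and zero: "\<phi> 0 = 0"
    and mono: "strict_mono_on {0<..} (\<lambda>t. \<phi> t / t)"
    and anti: "strict_antimono_on {..<0} (\<lambda>t. \<phi> t / t)" and t: "t \<noteq> 0"
  shows "(LBINT s=0..t. \<phi> s) < \<phi> t * t / 2"
proof (cases "t > 0")
  case True then show ?thesis using LBINT_less_half_if_strict_mono_quotient[OF cont zero mono] by simp
next
  case False
  then have "t < 0" using t by simp
  define \<psi> where "\<psi> s = - \<phi> (- s)" for s
  have cont_\<psi>: "continuous_on UNIV \<psi>" unfolding \<psi>_def
    by (intro continuous_intros continuous_on_compose2[OF cont]) auto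
  have mono_\<psi>: "strict_mono_on {0<..} (\<lambda>s. \<psi> s / s)"
  proof (rule strict_mono_onI)
    fix r s :: real assume "r \<in> {0<..}" "s \<in> {0<..}" "r < s"
    then have "\<phi> (-r) / (-r) < \<phi> (-s) / (-s)" by (intro monotone_onD[OF anti]) auto
    then show "\<psi> r / r < \<psi> s / s" unfolding \<psi>_def by simp
  qed
  have "(LBINT s=0..t. \<phi> s) = (LBINT s=-t..0. \<phi> (-s))"
    using interval_integral_reflect[of 0 t \<phi>] by simp
  also have "\<dots> = (LBINT s=0..-t. \<psi> s)"
    unfolding \<psi>_def
    by (simp add: interval_lebesgue_integral_uminus interval_integral_endpoints_reverse[of "ereal (-t)"])
  also have "\<dots> < \<psi> (-t) * (-t) / 2"
    using LBINT_less_half_if_strict_mono_quotient[OF cont_\<psi> _ mono_\<psi>, of "-t"] \<open>t < 0\<close> zero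
    by (simp add: \<psi>_def)
  also have "\<dots> = \<phi> t * t / 2" by (simp add: \<psi>_def)
  finally show ?thesis .
qed

section \<open>Measurability and positivity of integrals\<close>

lemma tendsto_floor_mult_divide_real_of_nat:
  "(\<lambda>n. real_of_int \<lfloor>real n * y\<rfloor> / real n) \<longlonglongrightarrow> y"
proof (rule tendsto_sandwich[of "\<lambda>n. y - 1 / real n" _ _ "\<lambda>n. y"])
  show "\<forall>\<^sub>F n in sequentially. y - 1 / real n \<le> real_of_int \<lfloor>real n * y\<rfloor> / real n"
    using eventually_ge_at_top[of "1::nat"]
  proof eventually_elim
    case (elim n)
    have "real n * y - 1 \<le> real_of_int \<lfloor>real n * y\<rfloor>" by linarith
    then have "(real n * y - 1) / real n \<le> real_of_int \<lfloor>real n * y\<rfloor> / real n"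
      by (intro divide_right_mono) auto
    then show ?case using elim by (simp add: diff_divide_distrib)
  qed
  show "\<forall>\<^sub>F n in sequentially. real_of_int \<lfloor>real n * y\<rfloor> / real n \<le> y"
    using eventually_ge_at_top[of "1::nat"]
  proof eventually_elim
    case (elim n)
    have "real_of_int \<lfloor>real n * y\<rfloor> / real n \<le> (real n * y) / real n"
      by (intro divide_right_mono) auto
    then show ?case using elim by simp
  qed
  show "(\<lambda>n. y - 1 / real n) \<longlonglongrightarrow> y"
    using tendsto_diff[OF tendsto_const lim_inverse_n', of y] by simp
qed simp

lemma caratheodory_measurable_comp:
  fixes f :: "'a::euclidean_space \<Rightarrow> real \<Rightarrow> real"
  assumes car: "caratheodory \<Omega> f" and u: "set_borel_measurable lebesgue \<Omega> u"
  shows "set_borel_measurable lebesgue \<Omega> (\<lambda>x. f x (u x))"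
proof -
  define u' where "u' = (\<lambda>x. indicator \<Omega> x * u x)"
  have u'_meas: "u' \<in> borel_measurable lebesgue"
    using u by (simp add: set_borel_measurable_def u'_def)
  have f_meas: "(\<lambda>x. indicator \<Omega> x * f x t) \<in> borel_measurable lebesgue" for t
    using car by (simp add: caratheodory_def set_borel_measurable_def)
  \<comment> \<open>Each \<open>h n\<close> evaluates \<open>f\<close> at the countably many grid values \<open>k/n\<close>; continuity in \<open>t\<close> gives the limit.\<close>
  define h where "h n x = indicator \<Omega> x * f x (real_of_int \<lfloor>real n * u' x\<rfloor> / real n)" for n x
  have "h n \<in> borel_measurable lebesgue" for n
  proof -
    have "(\<lambda>x. \<lfloor>real n * u' x\<rfloor>) \<in> measurable lebesgue (count_space UNIV)"
      by (rule measurable_compose[OF _ measurable_real_floor]) (use u'_meas in simp)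
    then show ?thesis unfolding h_def
      by (rule measurable_compose_countable[where f="\<lambda>k x. indicator \<Omega> x * f x (real_of_int k / real n)", OF f_meas])
  qed
  then have lim_meas: "(\<lambda>x. lim (\<lambda>n. h n x)) \<in> borel_measurable lebesgue"
    by (rule borel_measurable_lim_metric)
  have "AE x in lebesgue. x \<in> \<Omega> \<longrightarrow> continuous_on UNIV (f x)"
    using car by (simp add: caratheodory_def)
  then have "AE x in lebesgue. lim (\<lambda>n. h n x) = indicator \<Omega> x *\<^sub>R f x (u x)"
  proof eventually_elim
    case (elim x)
    show ?case
    proof (cases "x \<in> \<Omega>")
      case True
      then have "isCont (f x) (u x)" using elim by (simp add: continuous_on_eq_continuous_at)
      from isCont_tendsto_compose[OF this tendsto_floor_mult_divide_real_of_nat]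
      have "(\<lambda>n. h n x) \<longlonglongrightarrow> f x (u x)" using True by (simp add: h_def u'_def)
      then show ?thesis using True by (simp add: limI)
    qed (simp add: h_def)
  qed
  then show ?thesis unfolding set_borel_measurable_def by (rule borel_measurable_AE[OF lim_meas])
qed

lemma set_integral_pos_if_pos_where_nonzero:
  fixes g u :: "'a::euclidean_space \<Rightarrow> real"
  assumes int: "set_integrable lebesgue \<Omega> g"
    and nonneg: "AE x\<in>\<Omega> in lebesgue. 0 \<le> g x"
    and pos: "AE x\<in>\<Omega> in lebesgue. u x \<noteq> 0 \<longrightarrow> 0 < g x"
    and nz: "nonzero_on \<Omega> u"
  shows "(\<integral>x\<in>\<Omega>. g x \<partial>lebesgue) > 0"
proof -
  define h where "h = (\<lambda>x. indicator \<Omega> x *\<^sub>R g x)"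
  have h_int: "integrable lebesgue h" using int by (simp add: set_integrable_def h_def)
  have h_nonneg: "AE x in lebesgue. 0 \<le> h x"
    using nonneg by eventually_elim (simp add: h_def indicator_def)
  have "integral\<^sup>L lebesgue h \<noteq> 0"
  proof
    assume "integral\<^sup>L lebesgue h = 0"
    then have "AE x in lebesgue. h x = 0"
      using integral_nonneg_eq_0_iff_AE[OF h_int h_nonneg] by simp
    then have "AE x\<in>\<Omega> in lebesgue. u x = 0" using pos
      by eventually_elim (auto simp: h_def)
    then show False using nz by (simp add: nonzero_on_def)
  qed
  moreover have "integral\<^sup>L lebesgue h \<ge> 0" using h_nonneg by (rule integral_nonneg_AE)
  ultimately show ?thesis by (simp add: set_lebesgue_integral_def h_def)
qed

lemma Fprim_zero: "Fprim f x 0 = 0"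
  by (simp add: Fprim_def interval_lebesgue_integral_def zero_ereal_def einterval_same
      set_lebesgue_integral_def)

section \<open>The functional on the Nehari manifold\<close>

lemma f1_pointwise_consequences:
  fixes \<Omega> :: "'a::euclidean_space set" and f :: "'a \<Rightarrow> real \<Rightarrow> real" and \<alpha> \<eta> :: "'a \<Rightarrow> real"
  assumes car: "caratheodory \<Omega> f"
    and mono: "AE x\<in>\<Omega> in lebesgue. strict_mono_on {0<..} (\<lambda>t. f x t / t) \<and>
                  strict_antimono_on {..<0} (\<lambda>t. f x t / t)"
    and lim_0: "AE x\<in>\<Omega> in lebesgue. ((\<lambda>t. f x t / t) \<longlongrightarrow> \<alpha> x) (at 0) \<and> \<alpha> x \<ge> 0"
    and lim_inf: "AE x\<in>\<Omega> in lebesgue. ((\<lambda>t. f x t / t) \<longlongrightarrow> \<eta> x) at_infinity"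
    and bound: "AE x\<in>\<Omega> in lebesgue. \<eta> x \<le> C"
  shows "AE x\<in>\<Omega> in lebesgue. \<forall>t. t \<noteq> 0 \<longrightarrow>
           0 < f x t * t \<and> f x t * t \<le> C * t\<^sup>2 \<and> Fprim f x t < f x t * t / 2"
  using car[unfolded caratheodory_def, THEN conjunct2] mono lim_0 lim_inf bound
proof eventually_elim
  case (elim x)
  show ?case
  proof (intro impI allI)
    fix t :: real assume "x \<in> \<Omega>" "t \<noteq> 0"
    with elim have cont: "continuous_on UNIV (f x)"
      and mono: "strict_mono_on {0<..} (\<lambda>t. f x t / t)"
      and anti: "strict_antimono_on {..<0} (\<lambda>t. f x t / t)"
      and lim_0: "((\<lambda>t. f x t / t) \<longlongrightarrow> \<alpha> x) (at 0)" and "\<alpha> x \<ge> 0"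
      and lim_inf: "((\<lambda>t. f x t / t) \<longlongrightarrow> \<eta> x) at_infinity" and "\<eta> x \<le> C"
      by auto
    have zero: "f x 0 = 0"
      using cont lim_0 by (intro zero_if_quotient_tendsto_at_0) (auto simp: continuous_on_eq_continuous_at)
    have "f x t / t * t\<^sup>2 \<le> C * t\<^sup>2"
      using quotient_le_tendsto_at_infinity[OF mono anti lim_inf \<open>t \<noteq> 0\<close>] \<open>\<eta> x \<le> C\<close>
      by (intro mult_right_mono) auto
    then have "f x t * t \<le> C * t\<^sup>2" using \<open>t \<noteq> 0\<close> by (simp add: power2_eq_square)
    then show "0 < f x t * t \<and> f x t * t \<le> C * t\<^sup>2 \<and> Fprim f x t < f x t * t / 2"
      using mult_self_pos_if_quotient_tendsto_nonneg[OF mono anti lim_0 \<open>\<alpha> x \<ge> 0\<close> \<open>t \<noteq> 0\<close>]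
        LBINT_less_half_if_strict_mono_antimono_quotient[OF cont zero mono anti \<open>t \<noteq> 0\<close>]
      by (simp add: Fprim_def)
  qed
qed

lemma set_integrable_mult_if_quadratic_bound:
  fixes f :: "'a::euclidean_space \<Rightarrow> real \<Rightarrow> real"
  assumes car: "caratheodory \<Omega> f" and u: "H01 \<Omega> u G"
    and bound: "AE x\<in>\<Omega> in lebesgue. \<forall>t. t \<noteq> 0 \<longrightarrow> 0 < f x t * t \<and> f x t * t \<le> C * t\<^sup>2"
  shows "set_integrable lebesgue \<Omega> (\<lambda>x. f x (u x) * u x)"
proof -
  have u_meas: "set_borel_measurable lebesgue \<Omega> u"
    and u_sq: "set_integrable lebesgue \<Omega> (\<lambda>x. (u x)\<^sup>2)"
    using u by (auto simp: H01_def)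
  have "(\<lambda>x. (indicator \<Omega> x *\<^sub>R f x (u x)) * (indicator \<Omega> x *\<^sub>R u x)) \<in> borel_measurable lebesgue"
    using caratheodory_measurable_comp[OF car u_meas] u_meas by (simp add: set_borel_measurable_def)
  also have "(\<lambda>x. (indicator \<Omega> x *\<^sub>R f x (u x)) * (indicator \<Omega> x *\<^sub>R u x)) =
      (\<lambda>x. indicator \<Omega> x *\<^sub>R (f x (u x) * u x))"
    by (auto simp: fun_eq_iff indicator_def)
  finally have meas: "(\<lambda>x. indicator \<Omega> x *\<^sub>R (f x (u x) * u x)) \<in> borel_measurable lebesgue" .
  show ?thesis
    unfolding set_integrable_def
  proof (rule Bochner_Integration.integrable_bound[OF _ meas])
    show "integrable lebesgue (\<lambda>x. \<bar>C\<bar> * (indicator \<Omega> x *\<^sub>R (u x)\<^sup>2))"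
      using u_sq by (simp add: set_integrable_def)
    show "AE x in lebesgue. norm (indicator \<Omega> x *\<^sub>R (f x (u x) * u x))
             \<le> norm (\<bar>C\<bar> * (indicator \<Omega> x *\<^sub>R (u x)\<^sup>2))"
      using bound
    proof eventually_elim
      case (elim x)
      have "\<bar>f x (u x) * u x\<bar> \<le> \<bar>C\<bar> * (u x)\<^sup>2" if "x \<in> \<Omega>" "u x \<noteq> 0"
      proof -
        have "0 < f x (u x) * u x" "f x (u x) * u x \<le> C * (u x)\<^sup>2"
          using elim that by auto
        moreover have "C * (u x)\<^sup>2 \<le> \<bar>C\<bar> * (u x)\<^sup>2" by (simp add: mult_right_mono)
        ultimately show ?thesis by simp
      qed
      then show ?case by (cases "u x = 0") (simp_all add: indicator_def abs_mult)
    qed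
  qed
qed

lemma Ifun_pos_if_Nehari:
  fixes f :: "'a::euclidean_space \<Rightarrow> real \<Rightarrow> real"
  assumes car: "caratheodory \<Omega> f" and N: "Nehari \<Omega> f u G"
    and pointwise: "AE x\<in>\<Omega> in lebesgue. \<forall>t. t \<noteq> 0 \<longrightarrow>
           0 < f x t * t \<and> f x t * t \<le> C * t\<^sup>2 \<and> Fprim f x t < f x t * t / 2"
  shows "Ifun \<Omega> f u G > 0"
proof -
  have u: "H01 \<Omega> u G" and nz: "nonzero_on \<Omega> u"
    and eq: "(\<integral>x\<in>\<Omega>. (norm (G x))\<^sup>2 \<partial>lebesgue) = (\<integral>x\<in>\<Omega>. f x (u x) * u x \<partial>lebesgue)"
    using N by (auto simp: Nehari_def)
  have "AE x\<in>\<Omega> in lebesgue. \<forall>t. t \<noteq> 0 \<longrightarrow> 0 < f x t * t \<and> f x t * t \<le> C * t\<^sup>2"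
    using pointwise by eventually_elim blast
  then have int: "set_integrable lebesgue \<Omega> (\<lambda>x. f x (u x) * u x)"
    by (rule set_integrable_mult_if_quadratic_bound[OF car u])
  have pos: "(\<integral>x\<in>\<Omega>. f x (u x) * u x \<partial>lebesgue) > 0"
  proof (rule set_integral_pos_if_pos_where_nonzero[OF int _ _ nz])
    show "AE x\<in>\<Omega> in lebesgue. 0 \<le> f x (u x) * u x"
      using pointwise by eventually_elim (metis less_imp_le mult_zero_right order_refl)
    show "AE x\<in>\<Omega> in lebesgue. u x \<noteq> 0 \<longrightarrow> 0 < f x (u x) * u x"
      using pointwise by eventually_elim blast
  qed
  have gap: "AE x\<in>\<Omega> in lebesgue. 0 \<le> (1/2) * (f x (u x) * u x) - Fprim f x (u x) \<and>
      (u x \<noteq> 0 \<longrightarrow> 0 < (1/2) * (f x (u x) * u x) - Fprim f x (u x))"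
    using pointwise
  proof eventually_elim
    case (elim x)
    show ?case
    proof (intro impI)
      assume "x \<in> \<Omega>"
      show "0 \<le> (1/2) * (f x (u x) * u x) - Fprim f x (u x) \<and>
          (u x \<noteq> 0 \<longrightarrow> 0 < (1/2) * (f x (u x) * u x) - Fprim f x (u x))"
      proof (cases "u x = 0")
        case False
        then have "Fprim f x (u x) < f x (u x) * u x / 2" using elim \<open>x \<in> \<Omega>\<close> by blast
        then show ?thesis by simp
      qed (simp add: Fprim_zero)
    qed
  qed
  \<comment> \<open>A non-integrable \<open>F(x,u(x))\<close> has integral \<open>0\<close> by convention; then \<open>I(u)\<close> is half the positive integral above.\<close>
  show ?thesis
  proof (cases "set_integrable lebesgue \<Omega> (\<lambda>x. Fprim f x (u x))")
    case True
    have int_half: "set_integrable lebesgue \<Omega> (\<lambda>x. (1/2) * (f x (u x) * u x))"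
      using int by simp
    have "(\<integral>x\<in>\<Omega>. (1/2) * (f x (u x) * u x) - Fprim f x (u x) \<partial>lebesgue) > 0"
      using gap
      by (intro set_integral_pos_if_pos_where_nonzero[OF set_integral_diff(1)[OF int_half True] _ _ nz])
        (auto elim!: eventually_mono)
    also have "(\<integral>x\<in>\<Omega>. (1/2) * (f x (u x) * u x) - Fprim f x (u x) \<partial>lebesgue) = Ifun \<Omega> f u G"
      unfolding Ifun_def eq set_integral_diff(2)[OF int_half True] by simp
    finally show ?thesis .
  next
    case False
    then have "(\<integral>x\<in>\<Omega>. Fprim f x (u x) \<partial>lebesgue) = 0"
      by (simp add: set_integrable_def set_lebesgue_integral_def not_integrable_integral_eq)
    then show ?thesis using pos by (simp add: Ifun_def eq)
  qed
qed

theorem lemma3p4: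
  fixes \<Omega> :: "'a::euclidean_space set" and f :: "'a \<Rightarrow> real \<Rightarrow> real"
    and \<alpha> \<eta> :: "'a \<Rightarrow> real"
  assumes dom: "smooth_bounded_domain \<Omega>"
    and car: "caratheodory \<Omega> f"
    and f1_mono: "AE x\<in>\<Omega> in lebesgue. strict_mono_on {0<..} (\<lambda>t. f x t / t) \<and>
                     strict_antimono_on {..<0} (\<lambda>t. f x t / t)"
    and f1_alpha: "AE x\<in>\<Omega> in lebesgue. ((\<lambda>t. f x t / t) \<longlongrightarrow> \<alpha> x) (at 0) \<and> \<alpha> x \<ge> 0"
    and f1_eta: "AE x\<in>\<Omega> in lebesgue. ((\<lambda>t. f x t / t) \<longlongrightarrow> \<eta> x) at_infinity"
    and Linf: "Linfty \<Omega> \<alpha>" "Linfty \<Omega> \<eta>"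
    and f2: "\<exists>m\<ge>1. eig \<Omega> \<eta> m < 1" "1 < eig \<Omega> \<alpha> 1"
  shows "(\<exists>c. \<forall>u G. Nehari \<Omega> f u G \<longrightarrow> Ifun \<Omega> f u G \<ge> c) \<and>
         (\<forall>u G. Nehari \<Omega> f u G \<longrightarrow> Ifun \<Omega> f u G > 0)"
proof -
  \<comment> \<open>Only (f1) and \<open>\<eta> \<in> L\<^sup>\<infinity>\<close> are needed.\<close>
  from Linf(2) obtain C where "AE x\<in>\<Omega> in lebesgue. \<bar>\<eta> x\<bar> \<le> C"
    by (auto simp: Linfty_def)
  then have "AE x\<in>\<Omega> in lebesgue. \<eta> x \<le> C" by eventually_elim auto
  from f1_pointwise_consequences[OF car f1_mono f1_alpha f1_eta this]
  have pos: "Ifun \<Omega> f u G > 0" if "Nehari \<Omega> f u G" for u G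
    using Ifun_pos_if_Nehari[OF car that] by blast
  then show ?thesis by (auto intro!: exI[of _ 0] less_imp_le)
qed

end
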